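(* Let $n,m$ be positive integers, $N=\{1,\dots,n\}$, and let $g$ be a kernel on $N$. The following are equivalent: (i) $g$ is a discrete $m$-interpolation kernel; (ii) for all $I_0\subseteq I_1\subseteq N$ and all $z:I_0\to\mathcal M_m(\mathbb C)$, $\|T_{g,z}(I_1)\|\le\|T_{g,z}\|$; (iii) for all $I_0\subseteq I_1\subseteq N$ such that $I_1\setminus I_0$ consists of a single point, and all $z:I_0\to\mathcal M_m(\mathbb C)$, $\|T_{g,z}(I_1)\|\le\|T_{g,z}\|$.
   Context: A function $g:N\times N\to\mathbb C$ is a kernel on $N$ if the matrix $(g(i,j))_{i,j\in N}$ is positive semidefinite and, with $\mathrm{spt}(g)=\{i:g(i,i)\ne0\}$, the matrix $(g(i,j))_{i,j\in\mathrm{spt}(g)}$ is positive definite. Let $g_i(j)=g(i,j)$ and let $H_g$ be the (finite-dimensional) Hilbert space spanned by $\{g_i:i\in\mathrm{spt}(g)\}$ with $\langle g_i,g_j\rangle=g(i,j)$... more precisely $\langle\sum c_ig_i,\sum d_jg_j\rangle=\sum_{i,j}g(i,j)c_i\bar d_j$. Let $H_{g,m}=\mathbb C^m\otimes H_g$, writing $ag_i=a\otimes g_i$. For $I\subseteq N$ let $H_{g,m}(I)=\mathrm{span}\{ag_i:a\in\mathbb C^m,\ i\in I\cap\mathrm{spt}(g)\}$, and for $z:I\to\mathcal M_m(\mathbb C)$ let $T_{g,z}\in\mathcal L(H_{g,m}(I))$ be defined by $T_{g,z}(ag_i)=(z(i)^*a)g_i$ for $a\in\mathbb C^m$, $i\in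 I\cap\mathrm{spt}(g)$. For $I_0\subseteq I_1\subseteq N$ let $H_{g,m}(I_0,I_1)=H_{g,m}(I_1)\ominus H_{g,m}(I_1\setminus I_0)$, and for $z:I_0\to\mathcal M_m(\mathbb C)$ let $T_{g,z}(I_1)=PT_{g,\tilde z}|_{H_{g,m}(I_0,I_1)}$, where $P$ is the orthogonal projection of $H_{g,m}(I_1)$ onto $H_{g,m}(I_0,I_1)$ and $\tilde z:I_1\to\mathcal M_m(\mathbb C)$ is any extension of $z$ (the result does not depend on the extension). $g$ is a discrete $m$-interpolation kernel if for every $I\subseteq N$ and every $z:I\to\mathcal M_m(\mathbb C)$, $\|T_{g,z}\|=\inf\{\|T_{g,\tilde z}\|:\tilde z:N\to\mathcal M_m(\mathbb C),\ \tilde z|_I=z\}$. *)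

theory Defs
  imports "HOL-Analysis.Analysis"
begin

text \<open>The index set N is modelled by a finite type 'n (N = UNIV), the space C^m by
  complex^'m (m = CARD('m)), and M_m(C) by complex^'m^'m.
  An element sum_i a_i g_i of H_{g,m} (i ranging over spt g, a_i in C^m) is represented by
  its coefficient function v :: 'n => complex^'m with v i = a_i (and v i = 0 off spt g);
  since the g_i (i in spt g) are linearly independent this representation is unique.\<close>

definition spt :: "('n \<Rightarrow> 'n \<Rightarrow> complex) \<Rightarrow> 'n set" where
  "spt g = {i. g i i \<noteq> 0}"

definition qform :: "('n::finite \<Rightarrow> 'n \<Rightarrow> complex) \<Rightarrow> ('n \<Rightarrow> complex) \<Rightarrow> complex" where
  "qform g c = (\<Sum>i\<in>UNIV. \<Sum>j\<in>UNIV. g i j * c i * cnj (c j))"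

definition is_kernel :: "('n::finite \<Rightarrow> 'n \<Rightarrow> complex) \<Rightarrow> bool" where
  "is_kernel g \<longleftrightarrow>
     (\<forall>c. Im (qform g c) = 0 \<and> Re (qform g c) \<ge> 0) \<and>
     (\<forall>c. (\<forall>i. i \<notin> spt g \<longrightarrow> c i = 0) \<and> (\<exists>i. c i \<noteq> 0) \<longrightarrow> Re (qform g c) > 0)"

text \<open>Inner product of H_{g,m}: <sum a_i g_i, sum b_j g_j> = sum g(i,j) <a_i,b_j>_{C^m}.\<close>
definition ipH :: "('n::finite \<Rightarrow> 'n \<Rightarrow> complex) \<Rightarrow> ('n \<Rightarrow> complex^'m::finite) \<Rightarrow> ('n \<Rightarrow> complex^'m) \<Rightarrow> complex" where
  "ipH g v w = (\<Sum>i\<in>spt g. \<Sum>j\<in>spt g. g i j * (\<Sum>k\<in>UNIV. v i $ k * cnj (w j $ k)))"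

definition nrmH :: "('n::finite \<Rightarrow> 'n \<Rightarrow> complex) \<Rightarrow> ('n \<Rightarrow> complex^'m::finite) \<Rightarrow> real" where
  "nrmH g v = sqrt (Re (ipH g v v))"

text \<open>H_{g,m}(I) = span {a g_i : a in C^m, i in I \<inter> spt g}.\<close>
definition Hsub :: "('n::finite \<Rightarrow> 'n \<Rightarrow> complex) \<Rightarrow> 'n set \<Rightarrow> ('n \<Rightarrow> complex^'m::finite) set" where
  "Hsub g I = {v. \<forall>i. i \<notin> I \<inter> spt g \<longrightarrow> v i = 0}"

definition Hcomp :: "('n::finite \<Rightarrow> 'n \<Rightarrow> complex) \<Rightarrow> 'n set \<Rightarrow> 'n set \<Rightarrow> ('n \<Rightarrow> complex^'m::finite) set" where
  "Hcomp g I0 I1 = {v \<in> Hsub g I1. \<forall>u \<in> Hsub g (I1 - I0). ipH g v u = 0}"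

definition adjm :: "complex^'m::finite^'m \<Rightarrow> complex^'m^'m" where
  "adjm A = (\<chi> k l. cnj (A $ l $ k))"

definition Tmap :: "('n \<Rightarrow> complex^'m::finite^'m) \<Rightarrow> ('n \<Rightarrow> complex^'m) \<Rightarrow> ('n \<Rightarrow> complex^'m)" where
  "Tmap z v = (\<lambda>i. adjm (z i) *v v i)"

definition projH :: "('n::finite \<Rightarrow> 'n \<Rightarrow> complex) \<Rightarrow> ('n \<Rightarrow> complex^'m::finite) set \<Rightarrow> ('n \<Rightarrow> complex^'m) \<Rightarrow> ('n \<Rightarrow> complex^'m)" where
  "projH g W w = (THE p. p \<in> W \<and> (\<forall>u\<in>W. ipH g (\<lambda>i. w i - p i) u = 0))"

text \<open>T_{g,z}(I1) = P T_{g,z} restricted to H_{g,m}(I0,I1) (z itself, a total function,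
  serves as the extension of z|I0 to I1).\<close>
definition Tcomp :: "('n::finite \<Rightarrow> 'n \<Rightarrow> complex) \<Rightarrow> ('n \<Rightarrow> complex^'m::finite^'m) \<Rightarrow> 'n set \<Rightarrow> 'n set
     \<Rightarrow> ('n \<Rightarrow> complex^'m) \<Rightarrow> ('n \<Rightarrow> complex^'m)" where
  "Tcomp g z I0 I1 v = projH g (Hcomp g I0 I1) (Tmap z v)"

definition opnorm :: "('n::finite \<Rightarrow> 'n \<Rightarrow> complex) \<Rightarrow> ('n \<Rightarrow> complex^'m::finite) set
     \<Rightarrow> (('n \<Rightarrow> complex^'m) \<Rightarrow> ('n \<Rightarrow> complex^'m)) \<Rightarrow> real" where
  "opnorm g V T = Sup {nrmH g (T v) | v. v \<in> V \<and> nrmH g v \<le> 1}"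

text \<open>Discrete m-interpolation kernel (m = CARD('m)); z : I -> M_m is a total function whose
  values off I are irrelevant.\<close>
definition discrete_interp_kernel :: "('n::finite \<Rightarrow> 'n \<Rightarrow> complex) \<Rightarrow> 'm::finite itself \<Rightarrow> bool" where
  "discrete_interp_kernel g TYPE('m) \<longleftrightarrow>
     (\<forall>I (z :: 'n \<Rightarrow> complex^'m^'m).
        opnorm g (Hsub g I) (Tmap z) =
        Inf {opnorm g (Hsub g UNIV) (Tmap w) | w. \<forall>i\<in>I. w i = z i})"

end

theory Submission
  imports Defs "HOL-Library.Function_Algebras"
begin

text \<open>For (i) \<open>\<Longrightarrow>\<close> (ii), if \<open>w\<close> extends \<open>z|\<^bsub>I\<^sub>0\<^esub>\<close> to \<open>N\<close>
  then \<open>T\<^sub>g\<^sub>,\<^sub>z(I\<^sub>1)\<close> is a compression of \<open>T\<^sub>g\<^sub>,\<^sub>w\<close>, so its norm is at most \<open>\<parallel>T\<^sub>g\<^sub>,\<^sub>w\<parallel>\<close>, whose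
  infimum over all such \<open>w\<close> is \<open>\<parallel>T\<^sub>g\<^sub>,\<^sub>z\<parallel>\<close> by (i).

  For (iii) \<open>\<Longrightarrow>\<close> (i), extend \<open>z\<close> one point \<open>p\<close> at a time, as in Parrott's theorem. With
  \<open>K = H\<^sub>g\<^sub>,\<^sub>m(I\<^sub>0, I\<^sub>0 \<union> {p})\<close>, the space \<open>H\<^sub>g\<^sub>,\<^sub>m(I\<^sub>0 \<union> {p})\<close> splits as
  \<open>H\<^sub>g\<^sub>,\<^sub>m({p}) \<oplus> K\<close>, and \<open>T\<^sub>g\<^sub>,\<^sub>w\<close> leaves \<open>H\<^sub>g\<^sub>,\<^sub>m({p})\<close> invariant; only its
  \<open>H\<^sub>g\<^sub>,\<^sub>m({p})\<close>-component depends on the new value \<open>w(p)\<close>. Given \<open>c' > c\<close>, solving the coercive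
  problem \<open>c'\<^sup>2\<langle>y, h\<rangle> - \<langle>Q y, Q h\<rangle> = \<langle>Q u, Q h\<rangle>\<close> on \<open>H\<^sub>g\<^sub>,\<^sub>m(I\<^sub>0)\<close> (where \<open>Q = P\<^sub>K T\<^sub>g\<^sub>,\<^sub>z\<close>
  and \<open>u\<close> is the part of \<open>a g\<^sub>p\<close> orthogonal to \<open>H\<^sub>g\<^sub>,\<^sub>m(I\<^sub>0)\<close>) determines, linearly in
  \<open>a\<close>, a value \<open>w(p)\<close> for which a direct expansion of \<open>\<parallel>T\<^sub>g\<^sub>,\<^sub>w x\<parallel>\<^sup>2\<close> gives the bound
  \<open>c'\<^sup>2\<parallel>x\<parallel>\<^sup>2\<close>. Adding the finitely many points of \<open>N - I\<close> with tolerances \<open>\<epsilon>/2\<^sup>k\<close> shows that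
  the infimum in (i) is attained in the limit.\<close>

section \<open>The kernel and the Gram inner product\<close>

lemma qform_supported:
  assumes "\<And>k. k \<notin> S \<Longrightarrow> c k = 0"
  shows "qform g c = (\<Sum>a\<in>S. \<Sum>b\<in>S. g a b * c a * cnj (c b))"
proof -
  have "qform g c = (\<Sum>a\<in>UNIV. \<Sum>b\<in>S. g a b * c a * cnj (c b))"
    unfolding qform_def by (intro sum.cong refl sum.mono_neutral_right) (auto simp: assms)
  also have "\<dots> = (\<Sum>a\<in>S. \<Sum>b\<in>S. g a b * c a * cnj (c b))"
    by (intro sum.mono_neutral_right) (auto simp: assms)
  finally show ?thesis .
qed

lemma qform_unit: "qform g (\<lambda>k. if k = i then 1 else 0) = g i i"
  by (subst qform_supported[of "{i}"]) auto

lemma qform_two_point: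
  assumes "i \<noteq> j"
  shows "qform g (\<lambda>k. if k = i then 1 else if k = j then x else 0)
     = g i i + g i j * cnj x + g j i * x + g j j * x * cnj x"
  using assms by (subst qform_supported[of "{i, j}"]) auto

text \<open>Hermitian symmetry follows from the reality of the quadratic form on the vectors
  \<open>e\<^sub>i + e\<^sub>j\<close> and \<open>e\<^sub>i + \<i> e\<^sub>j\<close>.\<close>
lemma kernel_hermitian:
  assumes "is_kernel g"
  shows "g j i = cnj (g i j)"
proof -
  have real: "Im (qform g c) = 0" for c using assms unfolding is_kernel_def by blast
  have diag: "Im (g k k) = 0" for k using real qform_unit by metis
  show ?thesis
  proof (cases "i = j")
    case True
    then show ?thesis using diag[of i] by (simp add: complex_eq_iff)
  next
    case False
    have "Im (g i j + g j i) = 0"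
      using real[of "\<lambda>k. if k = i then 1 else if k = j then 1 else 0"]
        qform_two_point[OF False, of g 1] diag[of i] diag[of j] by simp
    moreover have "Re (g j i) - Re (g i j) = 0"
      using real[of "\<lambda>k. if k = i then 1 else if k = j then \<i> else 0"]
        qform_two_point[OF False, of g \<i>] diag[of i] diag[of j] by simp
    ultimately show ?thesis by (simp add: complex_eq_iff)
  qed
qed

definition cinner :: "complex^'m::finite \<Rightarrow> complex^'m \<Rightarrow> complex" where
  "cinner a b = (\<Sum>k\<in>UNIV. a $ k * cnj (b $ k))"

lemma cinner_add_left: "cinner (a + b) c = cinner a c + cinner b c"
  by (simp add: cinner_def sum.distrib distrib_right)

lemma cinner_add_right: "cinner a (b + c) = cinner a b + cinner a c"
  by (simp add: cinner_def sum.distrib distrib_left)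

lemma cinner_diff_left: "cinner (a - b) c = cinner a c - cinner b c"
  by (simp add: cinner_def sum_subtractf left_diff_distrib)

lemma cinner_scale_left: "cinner (x *s a) c = x * cinner a c"
  by (simp add: cinner_def sum_distrib_left mult.assoc)

lemma cinner_scale_right: "cinner a (x *s c) = cnj x * cinner a c"
  by (simp add: cinner_def sum_distrib_left mult.assoc mult.left_commute)

lemma cinner_cnj: "cnj (cinner a b) = cinner b a"
  by (simp add: cinner_def mult.commute)

definition scaleH :: "complex \<Rightarrow> ('n \<Rightarrow> complex^'m::finite) \<Rightarrow> 'n \<Rightarrow> complex^'m" where
  "scaleH c v = (\<lambda>i. c *s v i)"

lemma scaleH_apply: "scaleH c v i = c *s v i"
  by (simp add: scaleH_def)

lemma ipH_cinner: "ipH g v w = (\<Sum>i\<in>spt g. \<Sum>j\<in>spt g. g i j * cinner (v i) (w j))"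
  by (simp add: ipH_def cinner_def)

lemma ipH_add_left: "ipH g (v + w) u = ipH g v u + ipH g w u"
  by (simp add: ipH_cinner cinner_add_left sum.distrib distrib_left)

lemma ipH_add_right: "ipH g u (v + w) = ipH g u v + ipH g u w"
  by (simp add: ipH_cinner cinner_add_right sum.distrib distrib_left)

lemma ipH_diff_left: "ipH g (v - w) u = ipH g v u - ipH g w u"
  by (simp add: ipH_cinner cinner_diff_left sum_subtractf right_diff_distrib)

lemma ipH_scale_left: "ipH g (scaleH c v) u = c * ipH g v u"
  by (simp add: ipH_cinner scaleH_apply cinner_scale_left sum_distrib_left mult.left_commute)

lemma ipH_scale_right: "ipH g u (scaleH c v) = cnj c * ipH g u v"
  by (simp add: ipH_cinner scaleH_apply cinner_scale_right sum_distrib_left mult.left_commute)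

lemma ipH_zero_left [simp]: "ipH g 0 u = 0"
  by (simp add: ipH_def)

lemma ipH_hermitian:
  assumes "is_kernel g"
  shows "ipH g w v = cnj (ipH g v w)"
proof -
  have "cnj (g i j) = g j i" for i j
    using kernel_hermitian[OF assms, of j i] by simp
  then have "cnj (ipH g v w) = (\<Sum>i\<in>spt g. \<Sum>j\<in>spt g. g j i * cinner (w j) (v i))"
    by (simp add: ipH_cinner cinner_cnj)
  also have "\<dots> = ipH g w v"
    unfolding ipH_cinner by (rule sum.swap)
  finally show ?thesis by simp
qed

lemma ipH_orthogonal_sym: "is_kernel g \<Longrightarrow> ipH g v w = 0 \<Longrightarrow> ipH g w v = 0"
  using ipH_hermitian[where v = v and w = w] by simp

lemma ipH_self_eq_sum_qform:
  "ipH g v v = (\<Sum>k\<in>UNIV. qform g (\<lambda>i. if i \<in> spt g then v i $ k else 0))"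
proof -
  have "ipH g v v = (\<Sum>i\<in>spt g. \<Sum>j\<in>spt g. \<Sum>k\<in>UNIV. g i j * (v i $ k * cnj (v j $ k)))"
    by (simp add: ipH_def sum_distrib_left)
  also have "\<dots> = (\<Sum>k\<in>UNIV. \<Sum>i\<in>spt g. \<Sum>j\<in>spt g. g i j * (v i $ k * cnj (v j $ k)))"
    by (subst sum.swap, rule sum.cong[OF refl], rule sum.swap)
  also have "\<dots> = (\<Sum>k\<in>UNIV. qform g (\<lambda>i. if i \<in> spt g then v i $ k else 0))"
    by (intro sum.cong refl, subst qform_supported[of "spt g"]) (auto simp: mult.assoc)
  finally show ?thesis .
qed

lemma ipH_self_real:
  assumes "is_kernel g"
  shows "Im (ipH g v v) = 0" and "Re (ipH g v v) \<ge> 0"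
  using assms unfolding ipH_self_eq_sum_qform Im_sum Re_sum is_kernel_def
  by (simp_all add: sum_nonneg)

lemma ipH_self_eq_0:
  assumes "is_kernel g" and "v \<in> Hsub g UNIV" and "Re (ipH g v v) = 0"
  shows "v = 0"
proof -
  let ?c = "\<lambda>k i. if i \<in> spt g then v i $ k else 0"
  have nonneg: "\<And>k. Re (qform g (?c k)) \<ge> 0"
    using assms(1) unfolding is_kernel_def by blast
  have "(\<Sum>k\<in>UNIV. Re (qform g (?c k))) = 0"
    using assms(3) unfolding ipH_self_eq_sum_qform by (simp add: Re_sum)
  then have zero: "\<And>k. Re (qform g (?c k)) = 0"
    using sum_nonneg_eq_0_iff[of UNIV "\<lambda>k. Re (qform g (?c k))"] nonneg by auto
  have vanish: "?c k i = 0" for k i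
  proof (rule ccontr)
    assume "?c k i \<noteq> 0"
    then have "(\<forall>j. j \<notin> spt g \<longrightarrow> ?c k j = 0) \<and> (\<exists>j. ?c k j \<noteq> 0)"
      by (cases "i \<in> spt g") auto
    moreover have "(\<forall>j. j \<notin> spt g \<longrightarrow> c j = 0) \<and> (\<exists>j. c j \<noteq> 0) \<longrightarrow> Re (qform g c) > 0"
      for c using assms(1) unfolding is_kernel_def by blast
    ultimately have "Re (qform g (?c k)) > 0" by (rule rev_mp)
    then show False using zero by simp
  qed
  have "v i = 0" if "i \<in> spt g" for i
    using vanish[where i=i] that by (simp add: vec_eq_iff)
  moreover have "v i = 0" if "i \<notin> spt g" for i
    using assms(2) that unfolding Hsub_def by blast
  ultimately have "v i = 0" for i by blast
  then show ?thesis by (simp add: fun_eq_iff)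
qed

lemma nrmH_square: "is_kernel g \<Longrightarrow> (nrmH g v)\<^sup>2 = Re (ipH g v v)"
  unfolding nrmH_def using ipH_self_real(2) by simp

lemma nrmH_nonneg: "is_kernel g \<Longrightarrow> nrmH g v \<ge> 0"
  unfolding nrmH_def using ipH_self_real(2) by simp

lemma nrmH_zero [simp]: "nrmH g 0 = 0"
  by (simp add: nrmH_def)

lemma nrmH_scale: "nrmH g (scaleH c v) = cmod c * nrmH g v"
proof -
  have "ipH g (scaleH c v) (scaleH c v) = (c * cnj c) * ipH g v v"
    by (simp add: ipH_scale_left ipH_scale_right)
  also have "c * cnj c = of_real ((cmod c)\<^sup>2)"
    by (rule complex_norm_square[symmetric])
  finally have "Re (ipH g (scaleH c v) (scaleH c v)) = (cmod c)\<^sup>2 * Re (ipH g v v)"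
    by simp
  then show ?thesis
    unfolding nrmH_def by (simp add: real_sqrt_mult)
qed

lemma nrmH_add_square:
  assumes "is_kernel g"
  shows "(nrmH g (a + b))\<^sup>2 = (nrmH g a)\<^sup>2 + 2 * Re (ipH g a b) + (nrmH g b)\<^sup>2"
proof -
  have "Re (ipH g b a) = Re (ipH g a b)"
    using ipH_hermitian[OF assms, of a b] by simp
  moreover have "(nrmH g (a + b))\<^sup>2 = Re (ipH g a a) + Re (ipH g a b) + Re (ipH g b a) + Re (ipH g b b)"
    by (simp add: nrmH_square[OF assms] ipH_add_left ipH_add_right)
  ultimately show ?thesis
    by (simp add: nrmH_square[OF assms])
qed

lemma nrmH_le_of_square_le:
  "is_kernel g \<Longrightarrow> c \<ge> 0 \<Longrightarrow> (nrmH g w)\<^sup>2 \<le> (c * nrmH g v)\<^sup>2 \<Longrightarrow> nrmH g w \<le> c * nrmH g v"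
  by (erule power2_le_imp_le) (simp add: nrmH_nonneg mult_nonneg_nonneg)

lemma nrmH_square_le_of_le:
  assumes "is_kernel g" and "nrmH g w \<le> c * nrmH g v"
  shows "(nrmH g w)\<^sup>2 \<le> c\<^sup>2 * (nrmH g v)\<^sup>2"
proof -
  have "(nrmH g w)\<^sup>2 \<le> (c * nrmH g v)\<^sup>2"
    by (rule power_mono[OF assms(2) nrmH_nonneg[OF assms(1)]])
  then show ?thesis by (simp add: power_mult_distrib)
qed

section \<open>Representation of conjugate-linear functionals\<close>

lemma sum_fun_apply: "(\<Sum>x\<in>S. f x) i = (\<Sum>x\<in>S. f x i)"
  by (induction S rule: infinite_finite_induct) auto

lemma conj_linear_expansion:
  fixes F :: "('n::finite \<Rightarrow> complex^'m::finite) \<Rightarrow> complex"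
  assumes add: "\<And>a b. F (a + b) = F a + F b" and scale: "\<And>c a. F (scaleH c a) = cnj c * F a"
    and supp: "\<And>i. i \<notin> A \<Longrightarrow> h i = 0"
  shows "F h = (\<Sum>i\<in>A. \<Sum>k\<in>UNIV. cnj (h i $ k) * F (\<lambda>j. if j = i then axis k 1 else 0))"
proof -
  let ?e = "\<lambda>i k j. if j = i then axis k 1 else 0 :: complex^'m"
  have "F 0 = 0"
    using scale[of 0 0] by (simp add: scaleH_def zero_fun_def)
  then have F_sum: "F (\<Sum>x\<in>S. f x) = (\<Sum>x\<in>S. F (f x))" for S and f :: "'a \<Rightarrow> 'n \<Rightarrow> complex^'m"
    using sum_comp_morphism[of F f S] add by (simp add: comp_def)
  have "h = (\<Sum>i\<in>A. \<Sum>k\<in>UNIV. scaleH (h i $ k) (?e i k))"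
  proof
    fix j
    have "(\<Sum>k\<in>UNIV. h i $ k *s ?e i k j) = (if j = i then h j else 0)" for i
      by (cases "j = i") (simp_all add: basis_expansion)
    then have "(\<Sum>i\<in>A. \<Sum>k\<in>UNIV. scaleH (h i $ k) (?e i k)) j = (\<Sum>i\<in>A. if j = i then h j else 0)"
      by (simp add: sum_fun_apply scaleH_apply)
    then show "h j = (\<Sum>i\<in>A. \<Sum>k\<in>UNIV. scaleH (h i $ k) (?e i k)) j"
      using supp[of j] by simp
  qed
  then have "F h = F (\<Sum>i\<in>A. \<Sum>k\<in>UNIV. scaleH (h i $ k) (?e i k))"
    by simp
  then show ?thesis
    by (simp add: F_sum scale)
qed

lemma linear_fun_inj_imp_surj:
  fixes \<Phi> :: "('n::finite \<Rightarrow> 'a::euclidean_space) \<Rightarrow> ('n \<Rightarrow> 'a)"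
  assumes add: "\<And>v w. \<Phi> (v + w) = \<Phi> v + \<Phi> w"
    and scale: "\<And>r v. \<Phi> (\<lambda>i. r *\<^sub>R v i) = (\<lambda>i. r *\<^sub>R \<Phi> v i)"
    and inj: "inj \<Phi>"
  shows "surj \<Phi>"
proof -
  define \<Psi> where "\<Psi> x = vec_lambda (\<Phi> (vec_nth x))" for x :: "'a^'n"
  have "linear \<Psi>"
  proof (rule linearI)
    fix x y :: "'a^'n"
    have "vec_nth (x + y) = vec_nth x + vec_nth y" by (simp add: fun_eq_iff)
    then show "\<Psi> (x + y) = \<Psi> x + \<Psi> y" unfolding \<Psi>_def by (simp add: add vec_eq_iff)
  next
    fix r :: real and x :: "'a^'n"
    have "vec_nth (r *\<^sub>R x) = (\<lambda>i. r *\<^sub>R vec_nth x i)" by (simp add: fun_eq_iff)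
    then show "\<Psi> (r *\<^sub>R x) = r *\<^sub>R \<Psi> x" unfolding \<Psi>_def by (simp add: scale vec_eq_iff)
  qed
  moreover have "inj \<Psi>"
  proof (rule injI)
    fix x y
    assume "\<Psi> x = \<Psi> y"
    then have "\<Phi> (vec_nth x) = \<Phi> (vec_nth y)"
      unfolding \<Psi>_def by (metis vec_lambda_inverse UNIV_I)
    then show "x = y"
      using inj by (simp add: inj_eq vec_nth_inject)
  qed
  ultimately have surj: "surj \<Psi>"
    using linear_inj_imp_surj by blast
  have "\<Phi> (vec_nth (inv \<Psi> (vec_lambda t))) = t" for t
    using surj_f_inv_f[OF surj, of "vec_lambda t"] unfolding \<Psi>_def by (metis vec_lambda_inverse UNIV_I)
  then show ?thesis
    unfolding surj_def by metis
qed

lemma scaleR_cvec: "r *\<^sub>R x = (of_real r *s x :: complex^'m::finite)"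
proof -
  have "(r *\<^sub>R x) $ k = (of_real r *s x) $ k" for k
    by (simp add: scaleR_conv_of_real[of r "x $ k"])
  then show ?thesis by (simp add: vec_eq_iff)
qed

text \<open>The coefficient map \<open>y \<mapsto> (B y (a g\<^sub>i))\<^sub>i\<^sub>,\<^sub>a\<close> is an injective linear endomorphism of a
  finite-dimensional space, hence onto.\<close>
lemma Hsub_riesz_representation:
  fixes g :: "'n::finite \<Rightarrow> 'n \<Rightarrow> complex"
    and B :: "('n \<Rightarrow> complex^'m::finite) \<Rightarrow> ('n \<Rightarrow> complex^'m) \<Rightarrow> complex"
  assumes add_left: "\<And>y1 y2 h. B (y1 + y2) h = B y1 h + B y2 h"
    and scale_left: "\<And>c y h. B (scaleH c y) h = c * B y h"
    and add_right: "\<And>y h1 h2. B y (h1 + h2) = B y h1 + B y h2"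
    and scale_right: "\<And>c y h. B y (scaleH c h) = cnj c * B y h"
    and definite: "\<And>y. y \<in> Hsub g J \<Longrightarrow> B y y = 0 \<Longrightarrow> y = 0"
    and f_add: "\<And>h1 h2. f (h1 + h2) = f h1 + f h2"
    and f_scale: "\<And>c h. f (scaleH c h) = cnj c * f h"
  shows "\<exists>y\<in>Hsub g J. \<forall>h\<in>Hsub g J. B y h = f h"
proof -
  define J' where "J' = J \<inter> spt g"
  define e where "e i k = (\<lambda>j. if j = i then axis k 1 else 0 :: complex^'m)" for i :: 'n and k
  define \<Phi> where "\<Phi> y = (\<lambda>i. if i \<in> J' then (\<chi> k. B y (e i k)) else y i)" for y
  have Hsub_J: "Hsub g J = {v. \<forall>i. i \<notin> J' \<longrightarrow> v i = 0}"
    unfolding Hsub_def J'_def by simp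
  have expand_B: "B y h = (\<Sum>i\<in>J'. \<Sum>k\<in>UNIV. cnj (h i $ k) * B y (e i k))" if "h \<in> Hsub g J" for y h
    unfolding e_def by (rule conj_linear_expansion[OF add_right scale_right]) (use that in \<open>auto simp: Hsub_J\<close>)
  have expand_f: "f h = (\<Sum>i\<in>J'. \<Sum>k\<in>UNIV. cnj (h i $ k) * f (e i k))" if "h \<in> Hsub g J" for h
    unfolding e_def by (rule conj_linear_expansion[OF f_add f_scale]) (use that in \<open>auto simp: Hsub_J\<close>)
  have diff_left: "B (y1 - y2) h = B y1 h - B y2 h" for y1 y2 h
    using add_left[of "y1 - y2" y2 h] by simp
  have \<Phi>_add: "\<Phi> (v + w) = \<Phi> v + \<Phi> w" for v w
    unfolding \<Phi>_def by (auto simp: fun_eq_iff vec_eq_iff add_left)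
  have \<Phi>_diff: "\<Phi> (v - w) = \<Phi> v - \<Phi> w" for v w
    unfolding \<Phi>_def by (auto simp: fun_eq_iff vec_eq_iff diff_left)
  have \<Phi>_scale: "\<Phi> (\<lambda>i. r *\<^sub>R v i) = (\<lambda>i. r *\<^sub>R \<Phi> v i)" for r v
  proof -
    have eq: "(\<lambda>i. r *\<^sub>R v i) = scaleH (of_real r) v"
      by (simp add: fun_eq_iff scaleH_def scaleR_cvec)
    show ?thesis
      unfolding eq \<Phi>_def scale_left by (simp add: fun_eq_iff vec_eq_iff scaleR_cvec scaleH_apply)
  qed
  have \<Phi>_eq_0: "y = 0" if "\<Phi> y = 0" for y
  proof -
    have "y i = 0" if "i \<notin> J'" for i
      using fun_cong[OF \<open>\<Phi> y = 0\<close>, of i] that unfolding \<Phi>_def by simp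
    then have y: "y \<in> Hsub g J"
      unfolding Hsub_J by blast
    have "B y (e i k) = 0" if "i \<in> J'" for i k
      using fun_cong[OF \<open>\<Phi> y = 0\<close>, of i] that unfolding \<Phi>_def by (simp add: vec_eq_iff)
    then have "B y y = 0"
      using expand_B[OF y, of y] by simp
    then show ?thesis
      using definite[OF y] by blast
  qed
  have "inj \<Phi>"
  proof (rule injI)
    fix v w
    assume "\<Phi> v = \<Phi> w"
    then have "v - w = 0"
      using \<Phi>_eq_0[of "v - w"] \<Phi>_diff[of v w] by simp
    then show "v = w" by simp
  qed
  then have "surj \<Phi>"
    by (rule linear_fun_inj_imp_surj[OF \<Phi>_add \<Phi>_scale])
  then obtain y where y: "(\<lambda>i. if i \<in> J' then (\<chi> k. f (e i k)) else 0) = \<Phi> y"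
    by (rule surjE)
  have "y i = 0" if "i \<notin> J'" for i
    using fun_cong[OF y[symmetric], of i] that unfolding \<Phi>_def by simp
  then have y_in: "y \<in> Hsub g J"
    unfolding Hsub_J by blast
  have "B y (e i k) = f (e i k)" if "i \<in> J'" for i k
    using fun_cong[OF y[symmetric], of i] that unfolding \<Phi>_def by (simp add: vec_eq_iff)
  then have "B y h = f h" if "h \<in> Hsub g J" for h
    using expand_B[OF that] expand_f[OF that] by simp
  then show ?thesis
    using y_in by blast
qed

section \<open>Orthogonal projections\<close>

definition subspaceH :: "('n::finite \<Rightarrow> 'n \<Rightarrow> complex) \<Rightarrow> ('n \<Rightarrow> complex^'m::finite) set \<Rightarrow> bool" where
  "subspaceH g W \<longleftrightarrow> W \<subseteq> Hsub g UNIV \<and> 0 \<in> W \<and> (\<forall>v\<in>W. \<forall>w\<in>W. v + w \<in> W) \<and> (\<forall>c. \<forall>v\<in>W. scaleH c v \<in> W)"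

lemma subspaceH_diff:
  assumes "subspaceH g W" and "v \<in> W" and "w \<in> W"
  shows "v - w \<in> W"
proof -
  have "v - w = v + scaleH (-1) w"
    by (simp add: fun_eq_iff scaleH_apply)
  then show ?thesis
    using assms unfolding subspaceH_def by metis
qed

lemma projH_eq_The: "projH g W v = (THE p. p \<in> W \<and> (\<forall>u\<in>W. ipH g (v - p) u = 0))"
  unfolding projH_def fun_diff_def by (rule refl)

locale orth_proj =
  fixes g :: "'n::finite \<Rightarrow> 'n \<Rightarrow> complex" and W :: "('n \<Rightarrow> complex^'m::finite) set"
  assumes kernel: "is_kernel g"
    and subspace: "subspaceH g W"
    and orth_proj_exists: "\<And>v. \<exists>p\<in>W. \<forall>u\<in>W. ipH g (v - p) u = 0"
begin

lemma orth_proj_unique: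
  assumes "p \<in> W" "\<forall>u\<in>W. ipH g (v - p) u = 0" and "q \<in> W" "\<forall>u\<in>W. ipH g (v - q) u = 0"
  shows "p = q"
proof -
  have d: "p - q \<in> W"
    using subspaceH_diff[OF subspace] assms by blast
  have "ipH g (p - q) (p - q) = ipH g (v - q) (p - q) - ipH g (v - p) (p - q)"
    by (simp add: ipH_diff_left)
  also have "\<dots> = 0"
    using assms d by simp
  finally have "Re (ipH g (p - q) (p - q)) = 0"
    by simp
  then have "p - q = 0"
    using ipH_self_eq_0[OF kernel] d subspace unfolding subspaceH_def by blast
  then show ?thesis by simp
qed

lemma projH_in: "projH g W v \<in> W"
  and projH_orth: "u \<in> W \<Longrightarrow> ipH g (v - projH g W v) u = 0"
proof -
  have "\<exists>!p. p \<in> W \<and> (\<forall>u\<in>W. ipH g (v - p) u = 0)"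
    using orth_proj_exists[of v] orth_proj_unique by blast
  then have "projH g W v \<in> W \<and> (\<forall>u\<in>W. ipH g (v - projH g W v) u = 0)"
    unfolding projH_eq_The by (rule theI')
  then show "projH g W v \<in> W" and "u \<in> W \<Longrightarrow> ipH g (v - projH g W v) u = 0"
    by auto
qed

lemma projH_eqI:
  assumes "p \<in> W" and "\<And>u. u \<in> W \<Longrightarrow> ipH g (v - p) u = 0"
  shows "projH g W v = p"
  using orth_proj_unique[OF projH_in _ assms(1)] projH_orth assms(2) by blast

lemma projH_add: "projH g W (v + w) = projH g W v + projH g W w"
proof (rule projH_eqI)
  show "projH g W v + projH g W w \<in> W"
    using subspace projH_in unfolding subspaceH_def by blast
  have eq: "v + w - (projH g W v + projH g W w) = (v - projH g W v) + (w - projH g W w)"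
    by simp
  show "ipH g (v + w - (projH g W v + projH g W w)) u = 0" if "u \<in> W" for u
    unfolding eq ipH_add_left using projH_orth[OF that] by simp
qed

lemma projH_scale: "projH g W (scaleH c v) = scaleH c (projH g W v)"
proof (rule projH_eqI)
  show "scaleH c (projH g W v) \<in> W"
    using subspace projH_in unfolding subspaceH_def by blast
  have eq: "scaleH c v - scaleH c (projH g W v) = scaleH c (v - projH g W v)"
    by (simp add: fun_eq_iff scaleH_apply vector_ssub_ldistrib)
  show "ipH g (scaleH c v - scaleH c (projH g W v)) u = 0" if "u \<in> W" for u
    unfolding eq ipH_scale_left using projH_orth[OF that] by simp
qed

lemma projH_diff: "projH g W (v - w) = projH g W v - projH g W w"
  using projH_add[of "v - w" w] by simp

lemma projH_id: "v \<in> W \<Longrightarrow> projH g W v = v"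
  by (rule projH_eqI) simp_all

lemma projH_eq_0: "(\<And>u. u \<in> W \<Longrightarrow> ipH g v u = 0) \<Longrightarrow> projH g W v = 0"
  by (rule projH_eqI) (use subspace in \<open>simp_all add: subspaceH_def\<close>)

lemma nrmH_square_projH:
  "(nrmH g v)\<^sup>2 = (nrmH g (projH g W v))\<^sup>2 + (nrmH g (v - projH g W v))\<^sup>2"
proof -
  have "ipH g (projH g W v) (v - projH g W v) = 0"
    by (rule ipH_orthogonal_sym[OF kernel projH_orth[OF projH_in]])
  then show ?thesis
    using nrmH_add_square[OF kernel, of "projH g W v" "v - projH g W v"] by simp
qed

lemma projH_norm_le: "nrmH g (projH g W v) \<le> nrmH g v"
  using nrmH_square_projH[of v] nrmH_nonneg[OF kernel]
  by (metis le_add_same_cancel1 power2_le_imp_le zero_le_power2)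

end

lemma Hsub_mono: "J \<subseteq> J' \<Longrightarrow> Hsub g J \<subseteq> Hsub g J'"
  unfolding Hsub_def by auto

lemma subspaceH_Hsub: "subspaceH g (Hsub g J)"
  unfolding subspaceH_def Hsub_def by (auto simp: scaleH_apply)

lemma orth_proj_Hsub:
  assumes "is_kernel g"
  shows "orth_proj g (Hsub g J)"
proof
  fix v
  have "\<exists>p\<in>Hsub g J. \<forall>h\<in>Hsub g J. ipH g p h = ipH g v h"
  proof (rule Hsub_riesz_representation)
    show "y = 0" if "y \<in> Hsub g J" and "ipH g y y = 0" for y
      using ipH_self_eq_0[OF assms, of y] that Hsub_mono[of J UNIV g] by auto
  qed (simp_all add: ipH_add_left ipH_add_right ipH_scale_left ipH_scale_right)
  then obtain p where "p \<in> Hsub g J" and "\<forall>h\<in>Hsub g J. ipH g p h = ipH g v h"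
    by blast
  then show "\<exists>p\<in>Hsub g J. \<forall>u\<in>Hsub g J. ipH g (v - p) u = 0"
    by (intro bexI[of _ p]) (auto simp: ipH_diff_left)
qed (use assms subspaceH_Hsub in auto)

lemma orth_proj_orthocomplement:
  assumes V: "orth_proj g V" and W: "orth_proj g W" and "W \<subseteq> V"
  defines "K \<equiv> {v \<in> V. \<forall>u\<in>W. ipH g v u = 0}"
  shows "orth_proj g K"
    and "projH g K v = projH g V v - projH g W (projH g V v)"
proof -
  have k: "is_kernel g"
    using V orth_proj.kernel by blast
  have "subspaceH g K"
    using orth_proj.subspace[OF V] unfolding subspaceH_def K_def
    by (auto simp: ipH_add_left ipH_scale_left)
  define p where "p v = projH g V v - projH g W (projH g V v)" for v
  have p_in: "p v \<in> K" for v
    using orth_proj.projH_in[OF V] orth_proj.projH_in[OF W] orth_proj.projH_orth[OF W] \<open>W \<subseteq> V\<close>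
      subspaceH_diff[OF orth_proj.subspace[OF V]] unfolding K_def p_def by blast
  have p_orth: "ipH g (v - p v) u = 0" if "u \<in> K" for u v
  proof -
    have "ipH g (v - projH g V v) u = 0"
      using orth_proj.projH_orth[OF V] that unfolding K_def by blast
    moreover have "ipH g (projH g W (projH g V v)) u = 0"
      using that orth_proj.projH_in[OF W] ipH_orthogonal_sym[OF k] unfolding K_def by blast
    moreover have "v - p v = (v - projH g V v) + projH g W (projH g V v)"
      unfolding p_def by simp
    ultimately show ?thesis
      by (simp only: ipH_add_left) simp
  qed
  show K: "orth_proj g K"
    using k \<open>subspaceH g K\<close> p_in p_orth by unfold_locales blast+
  show "projH g K v = projH g V v - projH g W (projH g V v)"
    using orth_proj.projH_eqI[OF K p_in p_orth] unfolding p_def by blast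
qed

lemma orth_proj_Hcomp: "is_kernel g \<Longrightarrow> orth_proj g (Hcomp g I0 I1)"
  unfolding Hcomp_def
  by (rule orth_proj_orthocomplement(1)[OF orth_proj_Hsub orth_proj_Hsub Hsub_mono]) auto

section \<open>Boundedness of the multiplication operators\<close>

lemma qform_scale: "qform g (\<lambda>i. a * c i) = (a * cnj a) * qform g c"
  unfolding qform_def by (simp add: sum_distrib_left mult_ac)

text \<open>The constants are the extrema of \<open>Re (qform g c)\<close> on the unit sphere of the coordinate
  subspace of \<open>spt g\<close>; they exist by compactness and are positive by definiteness.\<close>
lemma kernel_qform_equivalent:
  fixes g :: "'n::finite \<Rightarrow> 'n \<Rightarrow> complex"
  assumes k: "is_kernel g"
  obtains \<delta> \<Delta> where "\<delta> > 0" and "\<Delta> \<ge> 0"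
    and "\<And>c. (\<And>i. i \<notin> spt g \<Longrightarrow> c i = 0) \<Longrightarrow>
      \<delta> * (\<Sum>i\<in>UNIV. (cmod (c i))\<^sup>2) \<le> Re (qform g c) \<and> Re (qform g c) \<le> \<Delta> * (\<Sum>i\<in>UNIV. (cmod (c i))\<^sup>2)"
proof -
  define S where "S = sphere (0::complex^'n) 1 \<inter> (\<Inter>i\<in>- spt g. {x. x $ i = 0})"
  define f where "f x = Re (qform g (vec_nth x))" for x :: "complex^'n"
  have compact: "compact S"
    unfolding S_def by (intro compact_Int_closed compact_sphere closed_INT ballI closed_Collect_eq continuous_intros)
  have cont: "continuous_on S f"
    unfolding f_def qform_def by (intro continuous_intros)
  have pos: "f x > 0" if "x \<in> S" for x
  proof -
    have "x \<noteq> 0" using that unfolding S_def by auto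
    then obtain i where "x $ i \<noteq> 0" by (auto simp: vec_eq_iff)
    then show ?thesis
      using k that unfolding f_def S_def is_kernel_def by auto
  qed
  have normalized: "\<exists>y\<in>S. f y * (\<Sum>i\<in>UNIV. (cmod (c i))\<^sup>2) = Re (qform g c)"
    if supp: "\<And>i. i \<notin> spt g \<Longrightarrow> c i = 0" and "c \<noteq> (\<lambda>i. 0)" for c
  proof -
    define s where "s = (\<Sum>i\<in>UNIV. (cmod (c i))\<^sup>2)"
    obtain j where "c j \<noteq> 0" using \<open>c \<noteq> (\<lambda>i. 0)\<close> by auto
    then have "s > 0"
      unfolding s_def by (intro sum_pos2[of _ j]) auto
    define t where "t = 1 / sqrt s"
    define y where "y = vec_lambda (\<lambda>i. complex_of_real t * c i)"
    have ts: "t\<^sup>2 * s = 1"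
      unfolding t_def using \<open>s > 0\<close> by (simp add: power_divide)
    have "(norm y)\<^sup>2 = t\<^sup>2 * s"
      unfolding y_def s_def norm_vec_def L2_set_def
      by (simp add: sum_nonneg norm_mult power_mult_distrib sum_distrib_left)
    then have "norm y = 1"
      using ts power2_eq_iff_nonneg[of "norm y" 1] by simp
    then have "y \<in> S"
      unfolding S_def y_def using supp by auto
    moreover have "f y * s = Re (qform g c)"
    proof -
      have coeffs: "vec_nth y = (\<lambda>i. complex_of_real t * c i)"
        unfolding y_def by (simp add: fun_eq_iff)
      have "f y = t\<^sup>2 * Re (qform g c)"
        unfolding f_def coeffs qform_scale by (simp add: power2_eq_square)
      then show ?thesis
        using ts by (simp add: mult.commute mult.left_commute)
    qed
    ultimately show ?thesis
      unfolding s_def by blast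
  qed
  show ?thesis
  proof (cases "S = {}")
    case True
    then have zero: "c = (\<lambda>i. 0)" if "\<And>i. i \<notin> spt g \<Longrightarrow> c i = 0" for c :: "'n \<Rightarrow> complex"
      using normalized[of c, OF that] by blast
    show ?thesis
    proof (rule that[of 1 0])
      fix c :: "'n \<Rightarrow> complex"
      assume "\<And>i. i \<notin> spt g \<Longrightarrow> c i = 0"
      then have "c = (\<lambda>i. 0)" by (rule zero)
      then show "1 * (\<Sum>i\<in>UNIV. (cmod (c i))\<^sup>2) \<le> Re (qform g c) \<and> Re (qform g c) \<le> 0 * (\<Sum>i\<in>UNIV. (cmod (c i))\<^sup>2)"
        by (simp add: qform_def)
    qed simp_all
  next
    case False
    obtain x0 where x0: "x0 \<in> S" "\<And>y. y \<in> S \<Longrightarrow> f x0 \<le> f y"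
      using continuous_attains_inf[OF compact False cont] by blast
    obtain x1 where x1: "x1 \<in> S" "\<And>y. y \<in> S \<Longrightarrow> f y \<le> f x1"
      using continuous_attains_sup[OF compact False cont] by blast
    have "f x0 * (\<Sum>i\<in>UNIV. (cmod (c i))\<^sup>2) \<le> Re (qform g c) \<and> Re (qform g c) \<le> f x1 * (\<Sum>i\<in>UNIV. (cmod (c i))\<^sup>2)"
      if supp: "\<And>i. i \<notin> spt g \<Longrightarrow> c i = 0" for c
    proof (cases "c = (\<lambda>i. 0)")
      case True
      then show ?thesis by (simp add: qform_def)
    next
      case False
      then obtain y where "y \<in> S" and y: "f y * (\<Sum>i\<in>UNIV. (cmod (c i))\<^sup>2) = Re (qform g c)"
        using normalized[of c, OF supp False] by blast
      then show ?thesis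
        using x0(2)[OF \<open>y \<in> S\<close>] x1(2)[OF \<open>y \<in> S\<close>]
        by (metis mult_right_mono sum_nonneg zero_le_power2)
    qed
    then show ?thesis
      using pos[OF x0(1)] pos[OF x1(1)] by (intro that[of "f x0" "f x1"]) auto
  qed
qed

lemma nrmH_equivalent:
  fixes g :: "'n::finite \<Rightarrow> 'n \<Rightarrow> complex"
  assumes k: "is_kernel g"
  obtains \<delta> \<Delta> where "\<delta> > 0" and "\<Delta> \<ge> 0"
    and "\<And>v :: 'n \<Rightarrow> complex^'m::finite.
      \<delta> * (\<Sum>i\<in>spt g. (norm (v i))\<^sup>2) \<le> (nrmH g v)\<^sup>2 \<and> (nrmH g v)\<^sup>2 \<le> \<Delta> * (\<Sum>i\<in>spt g. (norm (v i))\<^sup>2)"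
proof -
  obtain \<delta> \<Delta> where d: "\<delta> > 0" "\<Delta> \<ge> 0" and bounds: "\<And>c. (\<And>i. i \<notin> spt g \<Longrightarrow> c i = 0) \<Longrightarrow>
      \<delta> * (\<Sum>i\<in>UNIV. (cmod (c i))\<^sup>2) \<le> Re (qform g c) \<and> Re (qform g c) \<le> \<Delta> * (\<Sum>i\<in>UNIV. (cmod (c i))\<^sup>2)"
    using kernel_qform_equivalent[OF k] by blast
  have "\<delta> * (\<Sum>i\<in>spt g. (norm (v i))\<^sup>2) \<le> (nrmH g v)\<^sup>2 \<and> (nrmH g v)\<^sup>2 \<le> \<Delta> * (\<Sum>i\<in>spt g. (norm (v i))\<^sup>2)"
    for v :: "'n \<Rightarrow> complex^'m"
  proof -
    define c where "c k = (\<lambda>i. if i \<in> spt g then v i $ k else 0)" for k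
    have nrm: "(nrmH g v)\<^sup>2 = (\<Sum>k\<in>UNIV. Re (qform g (c k)))"
      unfolding nrmH_square[OF k] ipH_self_eq_sum_qform c_def by (simp add: Re_sum)
    have "(\<Sum>k\<in>UNIV. \<Sum>i\<in>UNIV. (cmod (c k i))\<^sup>2) = (\<Sum>i\<in>UNIV. \<Sum>k\<in>UNIV. (cmod (c k i))\<^sup>2)"
      by (rule sum.swap)
    also have "\<dots> = (\<Sum>i\<in>spt g. \<Sum>k\<in>UNIV. (cmod (v i $ k))\<^sup>2)"
      by (rule sum.mono_neutral_cong_right) (auto simp: c_def)
    also have "\<dots> = (\<Sum>i\<in>spt g. (norm (v i))\<^sup>2)"
      by (simp add: norm_vec_def L2_set_def sum_nonneg)
    finally have coeffs: "(\<Sum>i\<in>spt g. (norm (v i))\<^sup>2) = (\<Sum>k\<in>UNIV. \<Sum>i\<in>UNIV. (cmod (c k i))\<^sup>2)" ..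
    have "\<delta> * (\<Sum>i\<in>UNIV. (cmod (c k i))\<^sup>2) \<le> Re (qform g (c k))"
      and "Re (qform g (c k)) \<le> \<Delta> * (\<Sum>i\<in>UNIV. (cmod (c k i))\<^sup>2)" for k
      using bounds[of "c k"] by (auto simp: c_def)
    then show ?thesis
      unfolding nrm coeffs sum_distrib_left by (auto intro: sum_mono)
  qed
  then show ?thesis
    using that d by blast
qed

lemma Tmap_bounded:
  fixes g :: "'n::finite \<Rightarrow> 'n \<Rightarrow> complex" and z :: "'n \<Rightarrow> complex^'m::finite^'m"
  assumes k: "is_kernel g"
  obtains K where "K \<ge> 0" and "\<And>v. nrmH g (Tmap z v) \<le> K * nrmH g v"
proof -
  obtain \<delta> \<Delta> where d: "\<delta> > 0" "\<Delta> \<ge> 0" and equiv: "\<And>v :: 'n \<Rightarrow> complex^'m.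
      \<delta> * (\<Sum>i\<in>spt g. (norm (v i))\<^sup>2) \<le> (nrmH g v)\<^sup>2 \<and> (nrmH g v)\<^sup>2 \<le> \<Delta> * (\<Sum>i\<in>spt g. (norm (v i))\<^sup>2)"
    using nrmH_equivalent[OF k] by blast
  have "\<forall>i. \<exists>K>0. \<forall>x. norm (adjm (z i) *v x) \<le> norm x * K"
    using bounded_linear.pos_bounded[OF matrix_vector_mul_bounded_linear] by blast
  then obtain Ki where Ki: "\<And>i. Ki i > 0" "\<And>i x. norm (adjm (z i) *v x) \<le> norm x * Ki i"
    by metis
  define M where "M = (\<Sum>i\<in>UNIV. Ki i)"
  have Ki_le: "Ki i \<le> M" for i
    unfolding M_def by (rule member_le_sum) (auto intro: less_imp_le Ki(1))
  have coeffs_le: "(\<Sum>i\<in>spt g. (norm (Tmap z v i))\<^sup>2) \<le> M\<^sup>2 * (\<Sum>i\<in>spt g. (norm (v i))\<^sup>2)" for v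
  proof -
    have "norm (Tmap z v i) \<le> M * norm (v i)" for i
      using Ki(2)[of i "v i"] Ki_le[of i] unfolding Tmap_def
      by (metis mult.commute mult_left_mono norm_ge_zero order_trans)
    then have "(norm (Tmap z v i))\<^sup>2 \<le> M\<^sup>2 * (norm (v i))\<^sup>2" for i
      by (metis norm_ge_zero power_mono power_mult_distrib)
    then show ?thesis
      unfolding sum_distrib_left by (rule sum_mono)
  qed
  define K where "K = sqrt (\<Delta> * M\<^sup>2 / \<delta>)"
  have "nrmH g (Tmap z v) \<le> K * nrmH g v" for v
  proof (rule nrmH_le_of_square_le[OF k])
    show "K \<ge> 0" unfolding K_def using d by simp
    have "(nrmH g (Tmap z v))\<^sup>2 \<le> \<Delta> * (\<Sum>i\<in>spt g. (norm (Tmap z v i))\<^sup>2)"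
      using equiv by blast
    also have "\<dots> \<le> \<Delta> * (M\<^sup>2 * (\<Sum>i\<in>spt g. (norm (v i))\<^sup>2))"
      using coeffs_le[of v] d by (simp add: mult_left_mono)
    also have "\<dots> = (\<Delta> * M\<^sup>2 / \<delta>) * (\<delta> * (\<Sum>i\<in>spt g. (norm (v i))\<^sup>2))"
      using d by simp
    also have "\<dots> \<le> (\<Delta> * M\<^sup>2 / \<delta>) * (nrmH g v)\<^sup>2"
      using equiv d by (intro mult_left_mono) auto
    also have "\<dots> = (K * nrmH g v)\<^sup>2"
      unfolding K_def using d by (simp add: power_mult_distrib)
    finally show "(nrmH g (Tmap z v))\<^sup>2 \<le> (K * nrmH g v)\<^sup>2" .
  qed
  moreover have "K \<ge> 0" unfolding K_def using d by simp
  ultimately show ?thesis using that by blast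
qed

section \<open>Operator norms\<close>

lemma bdd_above_opnorm_set:
  assumes "K \<ge> 0" and "\<And>v. nrmH g (T v) \<le> K * nrmH g v"
  shows "bdd_above {nrmH g (T v) | v. v \<in> V \<and> nrmH g v \<le> 1}"
proof (rule bdd_aboveI)
  fix x
  assume "x \<in> {nrmH g (T v) | v. v \<in> V \<and> nrmH g v \<le> 1}"
  then obtain w where "x = nrmH g (T w)" and "nrmH g w \<le> 1"
    by blast
  then show "x \<le> K"
    using assms(2)[of w] mult_left_le[OF _ assms(1)] by (metis order_trans)
qed

lemma opnorm_nonneg:
  assumes k: "is_kernel g" and V: "subspaceH g V"
    and "K \<ge> 0" and "\<And>v. nrmH g (T v) \<le> K * nrmH g v"
  shows "opnorm g V T \<ge> 0"
proof -
  have "nrmH g (T 0) \<le> opnorm g V T"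
    unfolding opnorm_def using V
    by (intro cSup_upper[OF _ bdd_above_opnorm_set[OF assms(3,4)]]) (auto simp: subspaceH_def)
  then show ?thesis
    using nrmH_nonneg[OF k] order_trans by blast
qed

lemma le_opnorm:
  assumes k: "is_kernel g" and V: "subspaceH g V"
    and "K \<ge> 0" and "\<And>v. nrmH g (T v) \<le> K * nrmH g v"
    and scale: "\<And>c v. T (scaleH c v) = scaleH c (T v)" and "v \<in> V"
  shows "nrmH g (T v) \<le> opnorm g V T * nrmH g v"
proof (cases "nrmH g v = 0")
  case True
  then show ?thesis
    using assms(4)[of v] by simp
next
  case False
  define n where "n = nrmH g v"
  have "n > 0"
    using False nrmH_nonneg[OF k, of v] unfolding n_def by simp
  define u where "u = scaleH (complex_of_real (1 / n)) v"
  have "u \<in> V"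
    using V \<open>v \<in> V\<close> unfolding subspaceH_def u_def by blast
  moreover have "nrmH g u = 1"
    unfolding u_def nrmH_scale n_def[symmetric] using \<open>n > 0\<close> by (simp add: norm_divide)
  ultimately have "nrmH g (T u) \<le> opnorm g V T"
    unfolding opnorm_def by (intro cSup_upper[OF _ bdd_above_opnorm_set[OF assms(3,4)]]) auto
  moreover have "nrmH g (T u) = nrmH g (T v) / n"
    unfolding u_def scale nrmH_scale using \<open>n > 0\<close> by (simp add: norm_divide)
  ultimately show ?thesis
    using \<open>n > 0\<close> unfolding n_def[symmetric] by (simp add: divide_le_eq)
qed

lemma opnorm_le:
  assumes V: "subspaceH g V" and "c \<ge> 0" and "\<And>v. v \<in> V \<Longrightarrow> nrmH g (T v) \<le> c * nrmH g v"
  shows "opnorm g V T \<le> c"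
  unfolding opnorm_def
proof (rule cSup_least)
  show "{nrmH g (T v) |v. v \<in> V \<and> nrmH g v \<le> 1} \<noteq> {}"
    using V unfolding subspaceH_def by force
  fix x
  assume "x \<in> {nrmH g (T v) |v. v \<in> V \<and> nrmH g v \<le> 1}"
  then obtain v where "x = nrmH g (T v)" and "v \<in> V" and "nrmH g v \<le> 1"
    by blast
  then show "x \<le> c"
    using assms(3)[of v] mult_left_le[OF _ assms(2)] by fastforce
qed

lemma Tmap_add: "Tmap z (v + w) = Tmap z v + Tmap z w"
  by (simp add: Tmap_def fun_eq_iff matrix_vector_right_distrib)

lemma Tmap_diff: "Tmap z (v - w) = Tmap z v - Tmap z w"
  by (simp add: Tmap_def fun_eq_iff matrix_vector_mult_diff_distrib)

lemma Tmap_scale: "Tmap z (scaleH c v) = scaleH c (Tmap z v)"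
  by (simp add: Tmap_def fun_eq_iff scaleH_apply vec.scale)

lemma Tmap_Hsub: "v \<in> Hsub g J \<Longrightarrow> Tmap z v \<in> Hsub g J"
  by (simp add: Tmap_def Hsub_def)

lemma Tmap_le_opnorm:
  assumes k: "is_kernel g" and "v \<in> Hsub g J"
  shows "nrmH g (Tmap z v) \<le> opnorm g (Hsub g J) (Tmap z) * nrmH g v"
proof -
  obtain K where "K \<ge> 0" "\<And>v. nrmH g (Tmap z v) \<le> K * nrmH g v"
    using Tmap_bounded[OF k] by blast
  then show ?thesis
    by (rule le_opnorm[OF k subspaceH_Hsub _ _ Tmap_scale assms(2)])
qed

lemma opnorm_Tmap_nonneg:
  assumes k: "is_kernel g"
  shows "opnorm g (Hsub g J) (Tmap z) \<ge> 0"
proof -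
  obtain K where "K \<ge> 0" "\<And>v. nrmH g (Tmap z v) \<le> K * nrmH g v"
    using Tmap_bounded[OF k] by blast
  then show ?thesis
    by (rule opnorm_nonneg[OF k subspaceH_Hsub])
qed

lemma Tcomp_le_opnorm:
  assumes k: "is_kernel g" and "v \<in> Hcomp g I0 I1"
  shows "nrmH g (Tcomp g z I0 I1 v) \<le> opnorm g (Hcomp g I0 I1) (Tcomp g z I0 I1) * nrmH g v"
proof -
  interpret K: orth_proj g "Hcomp g I0 I1"
    by (rule orth_proj_Hcomp[OF k])
  obtain K where "K \<ge> 0" "\<And>v. nrmH g (Tmap z v) \<le> K * nrmH g v"
    using Tmap_bounded[OF k] by blast
  then have "nrmH g (Tcomp g z I0 I1 v) \<le> K * nrmH g v" for v
    unfolding Tcomp_def using K.projH_norm_le order_trans by blast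
  moreover have "Tcomp g z I0 I1 (scaleH c v) = scaleH c (Tcomp g z I0 I1 v)" for c v
    unfolding Tcomp_def Tmap_scale K.projH_scale ..
  ultimately show ?thesis
    using le_opnorm[OF k K.subspace \<open>K \<ge> 0\<close>] assms(2) by blast
qed

lemma Tmap_eq_on_Hsub:
  assumes "\<forall>i\<in>I. w i = z i" and "v \<in> Hsub g I"
  shows "Tmap w v = Tmap z v"
proof
  fix i
  show "Tmap w v i = Tmap z v i"
    using assms unfolding Tmap_def Hsub_def by (cases "i \<in> I") auto
qed

lemma opnorm_Tmap_le_extension:
  fixes g :: "'n::finite \<Rightarrow> 'n \<Rightarrow> complex" and z w :: "'n \<Rightarrow> complex^'m::finite^'m"
  assumes k: "is_kernel g" and "\<forall>i\<in>I. w i = z i"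
  shows "opnorm g (Hsub g I) (Tmap z) \<le> opnorm g (Hsub g UNIV) (Tmap w)"
proof (rule opnorm_le[OF subspaceH_Hsub opnorm_Tmap_nonneg[OF k]])
  fix v :: "'n \<Rightarrow> complex^'m"
  assume "v \<in> Hsub g I"
  then show "nrmH g (Tmap z v) \<le> opnorm g (Hsub g UNIV) (Tmap w) * nrmH g v"
    using Tmap_le_opnorm[OF k, of v UNIV w] Tmap_eq_on_Hsub[OF assms(2)] Hsub_mono[of I UNIV g] by auto
qed

text \<open>Changing \<open>z\<close> off \<open>I\<^sub>0\<close> changes \<open>T\<^sub>g\<^sub>,\<^sub>z v\<close> by a vector of \<open>H\<^sub>g\<^sub>,\<^sub>m(I\<^sub>1 - I\<^sub>0)\<close>,
  which the projection kills.\<close>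
lemma Tcomp_extension_independent:
  assumes k: "is_kernel g" and "\<forall>i\<in>I0. w i = z i" and "v \<in> Hsub g I1"
  shows "Tcomp g z I0 I1 v = Tcomp g w I0 I1 v"
proof -
  interpret K: orth_proj g "Hcomp g I0 I1"
    by (rule orth_proj_Hcomp[OF k])
  have "Tmap z v - Tmap w v \<in> Hsub g (I1 - I0)"
    using assms(2,3) unfolding Hsub_def Tmap_def by auto
  then have "ipH g (Tmap z v - Tmap w v) u = 0" if "u \<in> Hcomp g I0 I1" for u
    using that ipH_orthogonal_sym[OF k] unfolding Hcomp_def by blast
  then have "projH g (Hcomp g I0 I1) (Tmap z v - Tmap w v) = 0"
    by (rule K.projH_eq_0)
  then show ?thesis
    unfolding Tcomp_def K.projH_diff by simp
qed

lemma interp_kernel_imp_compression_le: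
  fixes g :: "'n::finite \<Rightarrow> 'n \<Rightarrow> complex" and z :: "'n \<Rightarrow> complex^'m::finite^'m"
  assumes k: "is_kernel g" and "discrete_interp_kernel g TYPE('m)"
  shows "opnorm g (Hcomp g I0 I1) (Tcomp g z I0 I1) \<le> opnorm g (Hsub g I0) (Tmap z)"
proof -
  interpret K: orth_proj g "Hcomp g I0 I1"
    by (rule orth_proj_Hcomp[OF k])
  have "opnorm g (Hcomp g I0 I1) (Tcomp g z I0 I1) \<le> opnorm g (Hsub g UNIV) (Tmap w)"
    if w: "\<forall>i\<in>I0. w i = z i" for w
  proof (rule opnorm_le[OF K.subspace opnorm_Tmap_nonneg[OF k]])
    fix v :: "'n \<Rightarrow> complex^'m"
    assume v: "v \<in> Hcomp g I0 I1"
    then have "v \<in> Hsub g I1"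
      unfolding Hcomp_def by blast
    then have "Tcomp g z I0 I1 v = Tcomp g w I0 I1 v"
      by (rule Tcomp_extension_independent[OF k w])
    then have "nrmH g (Tcomp g z I0 I1 v) = nrmH g (projH g (Hcomp g I0 I1) (Tmap w v))"
      unfolding Tcomp_def by simp
    also have "\<dots> \<le> nrmH g (Tmap w v)"
      by (rule K.projH_norm_le)
    also have "\<dots> \<le> opnorm g (Hsub g UNIV) (Tmap w) * nrmH g v"
      by (rule Tmap_le_opnorm[OF k]) (use v in \<open>auto simp: Hcomp_def Hsub_def\<close>)
    finally show "nrmH g (Tcomp g z I0 I1 v) \<le> opnorm g (Hsub g UNIV) (Tmap w) * nrmH g v" .
  qed
  then have "opnorm g (Hcomp g I0 I1) (Tcomp g z I0 I1)
      \<le> Inf {opnorm g (Hsub g UNIV) (Tmap w) | w. \<forall>i\<in>I0. w i = z i}"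
    by (intro cInf_greatest) auto
  moreover have "opnorm g (Hsub g I0) (Tmap z) = Inf {opnorm g (Hsub g UNIV) (Tmap w) | w. \<forall>i\<in>I0. w i = z i}"
    using assms(2) unfolding discrete_interp_kernel_def by blast
  ultimately show ?thesis
    by (rule ord_le_eq_trans[OF _ sym])
qed

section \<open>Extension by one point\<close>

lemma adjm_adjm [simp]: "adjm (adjm A) = A"
  by (simp add: adjm_def vec_eq_iff)

text \<open>One step of Parrott's completion argument; it produces the new value at \<open>p\<close> in \<open>z_ext\<close>.\<close>
locale one_point_extension =
  fixes g :: "'n::finite \<Rightarrow> 'n \<Rightarrow> complex" and z :: "'n \<Rightarrow> complex^'m::finite^'m"
    and I0 :: "'n set" and p :: 'n and c c' :: real
  assumes kernel: "is_kernel g"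
    and p_notin: "p \<notin> I0" and p_spt: "p \<in> spt g"
    and c_nonneg: "0 \<le> c" and c_less: "c < c'"
    and Tmap_bound: "\<And>h. h \<in> Hsub g I0 \<Longrightarrow> nrmH g (Tmap z h) \<le> c * nrmH g h"
    and Tcomp_bound: "\<And>x. x \<in> Hcomp g I0 (insert p I0) \<Longrightarrow>
      nrmH g (Tcomp g z I0 (insert p I0) x) \<le> c * nrmH g x"
begin

abbreviation H0 :: "('n \<Rightarrow> complex^'m) set" where "H0 \<equiv> Hsub g I0"
abbreviation H1 :: "('n \<Rightarrow> complex^'m) set" where "H1 \<equiv> Hsub g (insert p I0)"
abbreviation Hp :: "('n \<Rightarrow> complex^'m) set" where "Hp \<equiv> Hsub g {p}"
abbreviation K :: "('n \<Rightarrow> complex^'m) set" where "K \<equiv> Hcomp g I0 (insert p I0)"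

interpretation H0: orth_proj g H0 by (rule orth_proj_Hsub[OF kernel])
interpretation H1: orth_proj g H1 by (rule orth_proj_Hsub[OF kernel])
interpretation Hp: orth_proj g Hp by (rule orth_proj_Hsub[OF kernel])
interpretation K: orth_proj g K by (rule orth_proj_Hcomp[OF kernel])

lemma H0_sub_H1: "H0 \<subseteq> H1"
  by (rule Hsub_mono) auto

lemma Hp_sub_H1: "Hp \<subseteq> H1"
  by (rule Hsub_mono) auto

lemma H1_sub_UNIV: "H1 \<subseteq> Hsub g UNIV"
  by (rule Hsub_mono) auto

lemma K_eq: "K = {v \<in> H1. \<forall>u\<in>Hp. ipH g v u = 0}"
proof -
  have "insert p I0 - I0 = {p}"
    using p_notin by auto
  then show ?thesis
    unfolding Hcomp_def by simp
qed

lemma projK_eq: "v \<in> H1 \<Longrightarrow> projH g K v = v - projH g Hp v"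
  using orth_proj_orthocomplement(2)[OF H1.orth_proj_axioms Hp.orth_proj_axioms Hp_sub_H1, of v]
  unfolding K_eq[symmetric] by (simp add: H1.projH_id)

lemma projK_Hp: "u \<in> Hp \<Longrightarrow> projH g K u = 0"
  by (rule K.projH_eq_0) (auto simp: K_eq intro: ipH_orthogonal_sym[OF kernel])

lemma nrmH_split:
  "v \<in> H1 \<Longrightarrow> (nrmH g v)\<^sup>2 = (nrmH g (projH g Hp v))\<^sup>2 + (nrmH g (projH g K v))\<^sup>2"
  using Hp.nrmH_square_projH[of v] by (simp add: projK_eq)

definition compr :: "('n \<Rightarrow> complex^'m) \<Rightarrow> 'n \<Rightarrow> complex^'m" where
  "compr v = projH g K (Tmap z v)"

lemma compr_add: "compr (v + w) = compr v + compr w"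
  unfolding compr_def Tmap_add K.projH_add ..

lemma compr_diff: "compr (v - w) = compr v - compr w"
  unfolding compr_def Tmap_diff K.projH_diff ..

lemma compr_scale: "compr (scaleH a v) = scaleH a (compr v)"
  unfolding compr_def Tmap_scale K.projH_scale ..

text \<open>\<open>T\<^sub>g\<^sub>,\<^sub>z\<close> maps \<open>H\<^sub>g\<^sub>,\<^sub>m({p})\<close> into itself, so \<open>compr\<close> only sees the component of \<open>x\<close> in \<open>K\<close>,
  where it is the compression.\<close>
lemma compr_bound:
  assumes "x \<in> H1"
  shows "nrmH g (compr x) \<le> c * nrmH g x"
proof -
  have Qp: "compr (projH g Hp x) = 0"
    unfolding compr_def by (rule projK_Hp[OF Tmap_Hsub[OF Hp.projH_in]])
  have "x = projH g K x + projH g Hp x"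
    using projK_eq[OF assms] by simp
  then have "compr x = compr (projH g K x + projH g Hp x)"
    by (rule arg_cong)
  also have "\<dots> = Tcomp g z I0 (insert p I0) (projH g K x)"
    unfolding compr_add Qp by (simp add: compr_def Tcomp_def)
  finally have "nrmH g (compr x) \<le> c * nrmH g (projH g K x)"
    using Tcomp_bound[OF K.projH_in] by simp
  also have "\<dots> \<le> c * nrmH g x"
    using K.projH_norm_le c_nonneg by (rule mult_left_mono)
  finally show ?thesis .
qed

definition coercive_form :: "('n \<Rightarrow> complex^'m) \<Rightarrow> ('n \<Rightarrow> complex^'m) \<Rightarrow> complex" where
  "coercive_form y h = of_real (c'\<^sup>2) * ipH g y h - ipH g (compr y) (compr h)"

lemma coercive_form_definite:
  assumes "y \<in> H0" and "coercive_form y y = 0"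
  shows "y = 0"
proof -
  have "y \<in> H1"
    using assms(1) H0_sub_H1 by blast
  have "Re (coercive_form y y) = c'\<^sup>2 * (nrmH g y)\<^sup>2 - (nrmH g (compr y))\<^sup>2"
    unfolding coercive_form_def nrmH_square[OF kernel] by simp
  then have "c'\<^sup>2 * (nrmH g y)\<^sup>2 = (nrmH g (compr y))\<^sup>2"
    using assms(2) by simp
  also have "\<dots> \<le> c\<^sup>2 * (nrmH g y)\<^sup>2"
    by (rule nrmH_square_le_of_le[OF kernel compr_bound[OF \<open>y \<in> H1\<close>]])
  finally have le: "c'\<^sup>2 * (nrmH g y)\<^sup>2 \<le> c\<^sup>2 * (nrmH g y)\<^sup>2" .
  have "c\<^sup>2 < c'\<^sup>2"
    using c_nonneg c_less by (intro power_strict_mono) auto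
  then have "\<not> (nrmH g y)\<^sup>2 > 0"
    using le mult_strict_right_mono by fastforce
  then have "Re (ipH g y y) = 0"
    using ipH_self_real(2)[OF kernel, of y] by (simp add: nrmH_square[OF kernel])
  then show ?thesis
    using ipH_self_eq_0[OF kernel] \<open>y \<in> H1\<close> H1_sub_UNIV by blast
qed

definition at_p :: "complex^'m \<Rightarrow> 'n \<Rightarrow> complex^'m" where
  "at_p a = (\<lambda>i. if i = p then a else 0)"

lemma at_p_add: "at_p (a + b) = at_p a + at_p b"
  by (simp add: at_p_def fun_eq_iff)

lemma at_p_scale: "at_p (x *s a) = scaleH x (at_p a)"
  by (simp add: at_p_def fun_eq_iff scaleH_apply)

lemma at_p_in_Hp: "at_p a \<in> Hp"
  using p_spt unfolding at_p_def Hsub_def by auto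

lemma Hp_eq_at_p: "v \<in> Hp \<Longrightarrow> v = at_p (v p)"
  unfolding Hsub_def at_p_def by auto

lemma H0_vanish_at_p: "h \<in> H0 \<Longrightarrow> h p = 0"
  using p_notin unfolding Hsub_def by blast

definition perp_at_p :: "complex^'m \<Rightarrow> 'n \<Rightarrow> complex^'m" where
  "perp_at_p a = at_p a - projH g H0 (at_p a)"

lemma perp_at_p_add: "perp_at_p (a + b) = perp_at_p a + perp_at_p b"
  unfolding perp_at_p_def at_p_add H0.projH_add by simp

lemma perp_at_p_scale: "perp_at_p (x *s a) = scaleH x (perp_at_p a)"
  unfolding perp_at_p_def at_p_scale H0.projH_scale by (simp add: fun_eq_iff scaleH_apply vector_ssub_ldistrib)

lemma perp_at_p_in_H1: "perp_at_p a \<in> H1"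
  unfolding perp_at_p_def using at_p_in_Hp Hp_sub_H1 H0.projH_in H0_sub_H1
  by (blast intro: subspaceH_diff[OF subspaceH_Hsub])

lemma perp_at_p_orth: "h \<in> H0 \<Longrightarrow> ipH g (perp_at_p a) h = 0"
  unfolding perp_at_p_def by (rule H0.projH_orth)

lemma perp_at_p_at_p: "perp_at_p a p = a"
  using H0_vanish_at_p[OF H0.projH_in] by (simp add: perp_at_p_def at_p_def)

lemma diff_projH0_eq_perp_at_p:
  assumes "x \<in> H1"
  shows "x - projH g H0 x = perp_at_p (x p)"
proof -
  define d where "d = (x - projH g H0 x) - perp_at_p (x p)"
  have "d i = 0" if "i \<notin> I0 \<inter> spt g" for i
  proof (cases "i = p")
    case True
    then show ?thesis
      unfolding d_def using perp_at_p_at_p H0_vanish_at_p[OF H0.projH_in] by simp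
  next
    case False
    then have "i \<notin> insert p I0 \<inter> spt g"
      using that by auto
    then show ?thesis
      unfolding d_def using assms perp_at_p_in_H1 H0.projH_in[of x] unfolding Hsub_def by auto
  qed
  then have "d \<in> H0"
    unfolding Hsub_def by blast
  moreover have "ipH g d d = 0"
  proof -
    have "ipH g d d = ipH g (x - projH g H0 x) d - ipH g (perp_at_p (x p)) d"
      unfolding d_def by (rule ipH_diff_left)
    also have "\<dots> = 0"
      using H0.projH_orth[OF \<open>d \<in> H0\<close>] perp_at_p_orth[OF \<open>d \<in> H0\<close>] by simp
    finally show ?thesis .
  qed
  ultimately have "d = 0"
    using ipH_self_eq_0[OF kernel, of d] H0_sub_H1 H1_sub_UNIV by auto
  then show ?thesis
    unfolding d_def by simp
qed

lemma coercive_form_add_left: "coercive_form (y1 + y2) h = coercive_form y1 h + coercive_form y2 h"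
  unfolding coercive_form_def compr_add ipH_add_left by (simp add: algebra_simps)

lemma coercive_form_diff_left: "coercive_form (y1 - y2) h = coercive_form y1 h - coercive_form y2 h"
  unfolding coercive_form_def compr_diff ipH_diff_left by (simp add: algebra_simps)

lemma coercive_form_scale_left: "coercive_form (scaleH x y) h = x * coercive_form y h"
  unfolding coercive_form_def compr_scale ipH_scale_left by (simp add: algebra_simps)

lemma coercive_form_add_right: "coercive_form y (h1 + h2) = coercive_form y h1 + coercive_form y h2"
  unfolding coercive_form_def compr_add ipH_add_right by (simp add: algebra_simps)

lemma coercive_form_scale_right: "coercive_form y (scaleH x h) = cnj x * coercive_form y h"
  unfolding coercive_form_def compr_scale ipH_scale_right by (simp add: algebra_simps)

definition corrector :: "complex^'m \<Rightarrow> 'n \<Rightarrow> complex^'m" where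
  "corrector a = (SOME y. y \<in> H0 \<and> (\<forall>h\<in>H0. coercive_form y h = ipH g (compr (perp_at_p a)) (compr h)))"

lemma corrector_spec:
  "corrector a \<in> H0 \<and> (\<forall>h\<in>H0. coercive_form (corrector a) h = ipH g (compr (perp_at_p a)) (compr h))"
proof -
  have "\<exists>y\<in>H0. \<forall>h\<in>H0. coercive_form y h = ipH g (compr (perp_at_p a)) (compr h)"
    by (rule Hsub_riesz_representation[OF coercive_form_add_left coercive_form_scale_left
          coercive_form_add_right coercive_form_scale_right coercive_form_definite])
      (simp_all add: compr_add compr_scale ipH_add_right ipH_scale_right)
  then show ?thesis
    unfolding corrector_def by (rule someI2_bex) blast
qed

lemma corrector_in_H0: "corrector a \<in> H0"
  using corrector_spec by blast

lemma corrector_represents: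
  "h \<in> H0 \<Longrightarrow> coercive_form (corrector a) h = ipH g (compr (perp_at_p a)) (compr h)"
  using corrector_spec by blast

lemma corrector_unique:
  assumes "y \<in> H0" and "\<And>h. h \<in> H0 \<Longrightarrow> coercive_form y h = ipH g (compr (perp_at_p a)) (compr h)"
  shows "corrector a = y"
proof -
  have "corrector a - y \<in> H0"
    using subspaceH_diff[OF subspaceH_Hsub corrector_in_H0 assms(1)] .
  moreover from this have "coercive_form (corrector a - y) (corrector a - y) = 0"
    unfolding coercive_form_diff_left using corrector_represents assms(2) by simp
  ultimately show ?thesis
    using coercive_form_definite by fastforce
qed

lemma corrector_add: "corrector (a + b) = corrector a + corrector b"
proof (rule corrector_unique)
  show "corrector a + corrector b \<in> H0"
    using corrector_in_H0 subspaceH_Hsub unfolding subspaceH_def by blast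
  show "coercive_form (corrector a + corrector b) h = ipH g (compr (perp_at_p (a + b))) (compr h)"
    if "h \<in> H0" for h
    unfolding coercive_form_add_left perp_at_p_add compr_add ipH_add_left
    using corrector_represents[OF that] by simp
qed

lemma corrector_scale: "corrector (x *s a) = scaleH x (corrector a)"
proof (rule corrector_unique)
  show "scaleH x (corrector a) \<in> H0"
    using corrector_in_H0 subspaceH_Hsub unfolding subspaceH_def by blast
  show "coercive_form (scaleH x (corrector a)) h = ipH g (compr (perp_at_p (x *s a))) (compr h)"
    if "h \<in> H0" for h
    unfolding coercive_form_scale_left perp_at_p_scale compr_scale ipH_scale_left
    using corrector_represents[OF that] by simp
qed

text \<open>The new value at \<open>p\<close> is \<open>adjm (matrix \<beta>)\<close>, where \<open>\<beta> a\<close> cancels the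
  \<open>H\<^sub>g\<^sub>,\<^sub>m({p})\<close>-component of \<open>T\<^sub>g\<^sub>,\<^sub>z\<close> applied to the off-\<open>p\<close> part of
  \<open>perp_at_p a + corrector a\<close>.\<close>
definition off_p_part :: "complex^'m \<Rightarrow> 'n \<Rightarrow> complex^'m" where
  "off_p_part a = perp_at_p a + corrector a - at_p a"

definition \<beta> :: "complex^'m \<Rightarrow> complex^'m" where
  "\<beta> a = - projH g Hp (Tmap z (off_p_part a)) p"

definition z_ext :: "'n \<Rightarrow> complex^'m^'m" where
  "z_ext = z(p := adjm (matrix \<beta>))"

lemma off_p_part_at_p: "off_p_part a p = 0"
  by (simp add: off_p_part_def perp_at_p_at_p H0_vanish_at_p[OF corrector_in_H0] at_p_def)

lemma \<beta>_linear: "Vector_Spaces.linear (*s) (*s) \<beta>"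
proof -
  have "off_p_part (a + b) = off_p_part a + off_p_part b" for a b
    unfolding off_p_part_def perp_at_p_add corrector_add at_p_add by simp
  moreover have "off_p_part (x *s a) = scaleH x (off_p_part a)" for x a
    unfolding off_p_part_def perp_at_p_scale corrector_scale at_p_scale
    by (simp add: fun_eq_iff scaleH_apply algebra_simps)
  ultimately have "\<beta> (a + b) = \<beta> a + \<beta> b" and "\<beta> (x *s a) = x *s \<beta> a" for a b x
    unfolding \<beta>_def by (simp_all add: Tmap_add Tmap_scale Hp.projH_add Hp.projH_scale scaleH_apply)
  then show ?thesis
    by (simp add: Vector_Spaces.linear_iff vec.vector_space_axioms)
qed

lemma Tmap_z_ext_decomposition:
  assumes "x \<in> H1"
  shows "Tmap z_ext x
    = Tmap z (projH g H0 x - corrector (x p)) + Tmap z (off_p_part (x p)) + at_p (\<beta> (x p))"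
proof
  fix i
  let ?a = "x p"
  show "Tmap z_ext x i = (Tmap z (projH g H0 x - corrector ?a) + Tmap z (off_p_part ?a) + at_p (\<beta> ?a)) i"
  proof (cases "i = p")
    case True
    have "projH g H0 x p = 0" and "corrector ?a p = 0"
      using H0_vanish_at_p[OF H0.projH_in] H0_vanish_at_p[OF corrector_in_H0] by auto
    then show ?thesis
      using True off_p_part_at_p matrix_works[OF \<beta>_linear] by (simp add: Tmap_def z_ext_def at_p_def)
  next
    case False
    have "x = projH g H0 x + perp_at_p ?a"
      using diff_projH0_eq_perp_at_p[OF assms] by (simp add: diff_eq_eq add.commute)
    then have "x i = projH g H0 x i + perp_at_p ?a i"
      by (metis plus_fun_apply)
    then show ?thesis
      using False by (simp add: Tmap_def z_ext_def at_p_def off_p_part_def matrix_vector_right_distrib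
          matrix_vector_mult_diff_distrib)
  qed
qed

lemma projHp_Tmap_z_ext:
  assumes "x \<in> H1"
  shows "projH g Hp (Tmap z_ext x) = projH g Hp (Tmap z (projH g H0 x - corrector (x p)))"
proof -
  let ?a = "x p"
  have "projH g Hp (Tmap z (off_p_part ?a)) = at_p (projH g Hp (Tmap z (off_p_part ?a)) p)"
    by (rule Hp_eq_at_p[OF Hp.projH_in])
  also have "\<dots> = at_p (- \<beta> ?a)"
    by (simp add: \<beta>_def)
  finally have cancel: "projH g Hp (Tmap z (off_p_part ?a)) + at_p (\<beta> ?a) = 0"
    by (simp add: at_p_def fun_eq_iff)
  show ?thesis
    unfolding Tmap_z_ext_decomposition[OF assms] Hp.projH_add Hp.projH_id[OF at_p_in_Hp] add.assoc cancel
    by simp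
qed

lemma projK_Tmap_z_ext:
  assumes "x \<in> H1"
  shows "projH g K (Tmap z_ext x) = compr x"
proof -
  have "Tmap z_ext x - Tmap z x \<in> Hp"
    using p_spt unfolding Hsub_def Tmap_def z_ext_def by auto
  then have "projH g K (Tmap z_ext x - Tmap z x) = 0"
    by (rule projK_Hp)
  then show ?thesis
    unfolding K.projH_diff compr_def by simp
qed

lemma compr_cross_term:
  assumes "u \<in> H0"
  shows "Re (ipH g (compr u) (compr (corrector a + perp_at_p a))) = c'\<^sup>2 * Re (ipH g u (corrector a))"
proof -
  have "ipH g (compr (corrector a + perp_at_p a)) (compr u)
      = ipH g (compr (corrector a)) (compr u) + coercive_form (corrector a) u"
    unfolding compr_add ipH_add_left corrector_represents[OF assms] ..
  also have "\<dots> = of_real (c'\<^sup>2) * ipH g (corrector a) u"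
    unfolding coercive_form_def by simp
  finally have "Re (ipH g (compr u) (compr (corrector a + perp_at_p a)))
      = c'\<^sup>2 * Re (ipH g (corrector a) u)"
    using ipH_hermitian[OF kernel, where v = "compr (corrector a + perp_at_p a)" and w = "compr u"] by simp
  also have "Re (ipH g (corrector a) u) = Re (ipH g u (corrector a))"
    using ipH_hermitian[OF kernel, where v = u and w = "corrector a"] by simp
  finally show ?thesis .
qed

lemma Tmap_z_ext_bound:
  assumes "x \<in> H1"
  shows "nrmH g (Tmap z_ext x) \<le> c' * nrmH g x"
proof -
  define a where "a = x p"
  define u where "u = projH g H0 x - corrector a"
  define v where "v = corrector a + perp_at_p a"
  have u: "u \<in> H0"
    unfolding u_def using subspaceH_diff[OF subspaceH_Hsub H0.projH_in corrector_in_H0] .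
  have v: "v \<in> H1"
    unfolding v_def using corrector_in_H0 H0_sub_H1 perp_at_p_in_H1 subspaceH_Hsub
    unfolding subspaceH_def by blast
  have "perp_at_p a = x - projH g H0 x"
    unfolding a_def using diff_projH0_eq_perp_at_p[OF assms] by simp
  then have x_eq: "x = u + v"
    unfolding u_def v_def by simp
  have split: "(nrmH g (Tmap z_ext x))\<^sup>2 = (nrmH g (projH g Hp (Tmap z u)))\<^sup>2 + (nrmH g (compr x))\<^sup>2"
    using nrmH_split[OF Tmap_Hsub[OF assms]] projHp_Tmap_z_ext[OF assms] projK_Tmap_z_ext[OF assms]
    unfolding u_def a_def by simp
  have Qx: "(nrmH g (compr x))\<^sup>2
      = (nrmH g (compr u))\<^sup>2 + 2 * (c'\<^sup>2 * Re (ipH g u (corrector a))) + (nrmH g (compr v))\<^sup>2"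
    using nrmH_add_square[OF kernel, of "compr u" "compr v"] compr_cross_term[OF u, of a, folded v_def]
    unfolding x_eq compr_add[of u v] by simp
  have Tu: "(nrmH g (projH g Hp (Tmap z u)))\<^sup>2 + (nrmH g (compr u))\<^sup>2 \<le> c\<^sup>2 * (nrmH g u)\<^sup>2"
    using nrmH_split[OF Tmap_Hsub[of u, OF H0_sub_H1[THEN subsetD, OF u]]]
      nrmH_square_le_of_le[OF kernel Tmap_bound[OF u]] unfolding compr_def by simp
  have Qv: "(nrmH g (compr v))\<^sup>2 \<le> c\<^sup>2 * (nrmH g v)\<^sup>2"
    by (rule nrmH_square_le_of_le[OF kernel compr_bound[OF v]])
  have "ipH g u (perp_at_p a) = 0"
    by (rule ipH_orthogonal_sym[OF kernel perp_at_p_orth[OF u]])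
  then have "(nrmH g x)\<^sup>2 = (nrmH g u)\<^sup>2 + 2 * Re (ipH g u (corrector a)) + (nrmH g v)\<^sup>2"
    unfolding x_eq nrmH_add_square[OF kernel] v_def ipH_add_right by simp
  then have x: "c'\<^sup>2 * (nrmH g x)\<^sup>2
      = c'\<^sup>2 * (nrmH g u)\<^sup>2 + 2 * (c'\<^sup>2 * Re (ipH g u (corrector a))) + c'\<^sup>2 * (nrmH g v)\<^sup>2"
    by (simp add: algebra_simps)
  have "c\<^sup>2 \<le> c'\<^sup>2"
    using c_nonneg c_less by (intro power_mono) auto
  then have "c\<^sup>2 * (nrmH g u)\<^sup>2 \<le> c'\<^sup>2 * (nrmH g u)\<^sup>2" and "c\<^sup>2 * (nrmH g v)\<^sup>2 \<le> c'\<^sup>2 * (nrmH g v)\<^sup>2"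
    by (simp_all add: mult_right_mono)
  then have "(nrmH g (Tmap z_ext x))\<^sup>2 \<le> c'\<^sup>2 * (nrmH g x)\<^sup>2"
    using split Qx Tu Qv x by linarith
  then show ?thesis
    using c_nonneg c_less by (intro nrmH_le_of_square_le[OF kernel]) (simp_all add: power_mult_distrib)
qed

end

lemma one_point_extension_opnorm:
  fixes g :: "'n::finite \<Rightarrow> 'n \<Rightarrow> complex" and z :: "'n \<Rightarrow> complex^'m::finite^'m"
  assumes k: "is_kernel g" and p: "p \<notin> I0" and "\<epsilon> > 0"
    and compression: "opnorm g (Hcomp g I0 (insert p I0)) (Tcomp g z I0 (insert p I0))
      \<le> opnorm g (Hsub g I0) (Tmap z)"
  obtains Z where "opnorm g (Hsub g (insert p I0)) (Tmap (z(p := Z))) \<le> opnorm g (Hsub g I0) (Tmap z) + \<epsilon>"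
proof -
  define c where "c = opnorm g (Hsub g I0) (Tmap z)"
  have c: "c \<ge> 0"
    unfolding c_def by (rule opnorm_Tmap_nonneg[OF k])
  have "\<exists>Z. \<forall>x\<in>Hsub g (insert p I0). nrmH g (Tmap (z(p := Z)) x) \<le> (c + \<epsilon>) * nrmH g x"
  proof (cases "p \<in> spt g")
    case True
    have "nrmH g (Tcomp g z I0 (insert p I0) x) \<le> c * nrmH g x" if "x \<in> Hcomp g I0 (insert p I0)" for x
      using order_trans[OF Tcomp_le_opnorm[OF k that] mult_right_mono[OF compression nrmH_nonneg[OF k]]]
      unfolding c_def .
    then interpret one_point_extension g z I0 p c "c + \<epsilon>"
      using k p True c \<open>\<epsilon> > 0\<close> Tmap_le_opnorm[OF k] unfolding c_def by unfold_locales auto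
    show ?thesis
      using Tmap_z_ext_bound unfolding z_ext_def by blast
  next
    case False
    then have same: "Hsub g (insert p I0) = (Hsub g I0 :: ('n \<Rightarrow> complex^'m) set)"
      unfolding Hsub_def by auto
    have "c * nrmH g x \<le> (c + \<epsilon>) * nrmH g x" for x
      using \<open>\<epsilon> > 0\<close> nrmH_nonneg[OF k, of x] by (simp add: mult_right_mono)
    show ?thesis
    proof (intro exI[of _ "z p"] ballI)
      fix x :: "'n \<Rightarrow> complex^'m"
      assume "x \<in> Hsub g (insert p I0)"
      then have "x \<in> Hsub g I0"
        using same by blast
      then show "nrmH g (Tmap (z(p := z p)) x) \<le> (c + \<epsilon>) * nrmH g x"
        using order_trans[OF Tmap_le_opnorm[OF k \<open>x \<in> Hsub g I0\<close>, of z, folded c_def]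
            \<open>c * nrmH g x \<le> (c + \<epsilon>) * nrmH g x\<close>]
        by simp
    qed
  qed
  then obtain Z where "\<And>x. x \<in> Hsub g (insert p I0) \<Longrightarrow> nrmH g (Tmap (z(p := Z)) x) \<le> (c + \<epsilon>) * nrmH g x"
    by blast
  then have "opnorm g (Hsub g (insert p I0)) (Tmap (z(p := Z))) \<le> c + \<epsilon>"
    using c \<open>\<epsilon> > 0\<close> by (intro opnorm_le[OF subspaceH_Hsub]) auto
  then show ?thesis
    using that unfolding c_def by blast
qed

lemma one_point_compression_le_imp_extension:
  fixes g :: "'n::finite \<Rightarrow> 'n \<Rightarrow> complex"
  assumes k: "is_kernel g"
    and one_point: "\<forall>I0 I1 (z :: 'n \<Rightarrow> complex^'m::finite^'m). I0 \<subseteq> I1 \<and> (\<exists>p. I1 - I0 = {p}) \<longrightarrow>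
      opnorm g (Hcomp g I0 I1) (Tcomp g z I0 I1) \<le> opnorm g (Hsub g I0) (Tmap z)"
    and "finite F" and "\<epsilon> > 0"
  shows "\<exists>w :: 'n \<Rightarrow> complex^'m^'m. (\<forall>i\<in>I. w i = z i) \<and>
    opnorm g (Hsub g (I \<union> F)) (Tmap w) \<le> opnorm g (Hsub g I) (Tmap z) + \<epsilon>"
  using \<open>finite F\<close> \<open>\<epsilon> > 0\<close>
proof (induction F arbitrary: \<epsilon> rule: finite_induct)
  case empty
  then show ?case by auto
next
  case (insert q F)
  show ?case
  proof (cases "q \<in> I")
    case True
    then show ?thesis
      using insert.IH[OF insert.prems] by (simp add: insert_absorb)
  next
    case False
    obtain w where w: "\<forall>i\<in>I. w i = z i"
      and w_le: "opnorm g (Hsub g (I \<union> F)) (Tmap w) \<le> opnorm g (Hsub g I) (Tmap z) + \<epsilon> / 2"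
      using insert.IH[of "\<epsilon> / 2"] insert.prems by auto
    have q: "q \<notin> I \<union> F"
      using False insert.hyps(2) by blast
    then have "opnorm g (Hcomp g (I \<union> F) (insert q (I \<union> F))) (Tcomp g w (I \<union> F) (insert q (I \<union> F)))
        \<le> opnorm g (Hsub g (I \<union> F)) (Tmap w)"
      by (intro one_point[rule_format]) auto
    moreover have "\<epsilon> / 2 > 0"
      using insert.prems by simp
    ultimately obtain Z where Z_le: "opnorm g (Hsub g (insert q (I \<union> F))) (Tmap (w(q := Z)))
        \<le> opnorm g (Hsub g (I \<union> F)) (Tmap w) + \<epsilon> / 2"
      using one_point_extension_opnorm[OF k q] by blast
    have "opnorm g (Hsub g (I \<union> insert q F)) (Tmap (w(q := Z))) \<le> opnorm g (Hsub g I) (Tmap z) + \<epsilon>"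
      unfolding Un_insert_right using Z_le w_le by linarith
    moreover have "\<forall>i\<in>I. (w(q := Z)) i = z i"
      using w False by auto
    ultimately show ?thesis
      by blast
  qed
qed

lemma one_point_compression_le_imp_interp_kernel:
  fixes g :: "'n::finite \<Rightarrow> 'n \<Rightarrow> complex"
  assumes k: "is_kernel g"
    and one_point: "\<forall>I0 I1 (z :: 'n \<Rightarrow> complex^'m::finite^'m). I0 \<subseteq> I1 \<and> (\<exists>p. I1 - I0 = {p}) \<longrightarrow>
      opnorm g (Hcomp g I0 I1) (Tcomp g z I0 I1) \<le> opnorm g (Hsub g I0) (Tmap z)"
  shows "discrete_interp_kernel g TYPE('m)"
  unfolding discrete_interp_kernel_def
proof (intro allI antisym)
  fix I and z :: "'n \<Rightarrow> complex^'m^'m"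
  let ?S = "{opnorm g (Hsub g UNIV) (Tmap w) | w. \<forall>i\<in>I. w i = z i}"
  show "opnorm g (Hsub g I) (Tmap z) \<le> Inf ?S"
    using opnorm_Tmap_le_extension[OF k] by (intro cInf_greatest) auto
  show "Inf ?S \<le> opnorm g (Hsub g I) (Tmap z)"
  proof (rule field_le_epsilon)
    fix \<epsilon> :: real
    assume "\<epsilon> > 0"
    then obtain w where "\<forall>i\<in>I. w i = z i"
      and "opnorm g (Hsub g (I \<union> (UNIV - I))) (Tmap w) \<le> opnorm g (Hsub g I) (Tmap z) + \<epsilon>"
      using one_point_compression_le_imp_extension[where F = "UNIV - I" and I = I and z = z,
          OF k one_point finite] by blast
    moreover have "bdd_below ?S"
      using opnorm_Tmap_nonneg[OF k] by (intro bdd_belowI[of _ 0]) auto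
    ultimately show "Inf ?S \<le> opnorm g (Hsub g I) (Tmap z) + \<epsilon>"
      by (intro cInf_lower2[of "opnorm g (Hsub g UNIV) (Tmap w)"]) auto
  qed
qed

theorem proposition2p1:
  fixes g :: "'n::finite \<Rightarrow> 'n \<Rightarrow> complex"
  assumes "is_kernel g"
  shows "(discrete_interp_kernel g TYPE('m::finite) \<longleftrightarrow>
           (\<forall>I0 I1 (z :: 'n \<Rightarrow> complex^'m^'m). I0 \<subseteq> I1 \<longrightarrow>
              opnorm g (Hcomp g I0 I1) (Tcomp g z I0 I1) \<le> opnorm g (Hsub g I0) (Tmap z)))
       \<and> ((\<forall>I0 I1 (z :: 'n \<Rightarrow> complex^'m^'m). I0 \<subseteq> I1 \<longrightarrow>
              opnorm g (Hcomp g I0 I1) (Tcomp g z I0 I1) \<le> opnorm g (Hsub g I0) (Tmap z))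
          \<longleftrightarrow>
          (\<forall>I0 I1 (z :: 'n \<Rightarrow> complex^'m^'m). I0 \<subseteq> I1 \<and> (\<exists>p. I1 - I0 = {p}) \<longrightarrow>
              opnorm g (Hcomp g I0 I1) (Tcomp g z I0 I1) \<le> opnorm g (Hsub g I0) (Tmap z)))"
proof -
  have i_ii: "discrete_interp_kernel g TYPE('m) \<Longrightarrow>
      opnorm g (Hcomp g I0 I1) (Tcomp g z I0 I1) \<le> opnorm g (Hsub g I0) (Tmap z)"
    for I0 I1 and z :: "'n \<Rightarrow> complex^'m^'m"
    by (rule interp_kernel_imp_compression_le[OF assms])
  note iii_i = one_point_compression_le_imp_interp_kernel[OF assms]
  show ?thesis
    using i_ii iii_i by blast
qed

end
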